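(* Let $D\ge1$ and $a_0,\dots,a_{2D-1}\in\mathbb C$ satisfy $\sum_k\overline{a_k}a_{k+2\ell}=\delta_{0,\ell}$ for all $\ell$ and $\sum_ka_k=\sqrt2$. Then for every $k\in\mathbb N$ and $i_1,\dots,i_k\in\{0,1\}$, $$\mu_0\Big(\Big[\tfrac{i_1}2+\cdots+\tfrac{i_k}{2^k},\ \tfrac{i_1}2+\cdots+\tfrac{i_k}{2^k}+\tfrac1{2^k}\Big)\Big)\ \ge\ |a_0|^{2\cdot\#\{r:i_r=0\}}\,|a_{2D-1}|^{2\cdot\#\{r:i_r=1\}}.$$
   Context: $\mathbb T$ unit circle with normalized Haar measure, $L^2(\mathbb T)$ with $\langle f\mid g\rangle=\int\overline fg$, $e_n(z)=z^n$. $m_0(z)=\sum_{k=0}^{2D-1}a_kz^k$, $m_1(z)=z^{2D-1}\overline{m_0(-z)}$, $(S_if)(z)=m_i(z)f(z^2)$. $\mu_0$ is the Borel probability measure on $[0,1]$ determined by $\mu_0([\xi,\xi+2^{-k}))=\|S_{i_k}^*\cdots S_{i_1}^*e_0\|^2$ for every $\xi=\sum_{r=1}^ki_r2^{-r}$, $i_r\in\{0,1\}$. *)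

theory Defs
  imports "HOL-Probability.Probability"
begin

definition circle_measure :: "complex measure" where
  "circle_measure = distr (lebesgue_on {0..1}) borel (\<lambda>t. cis (2 * pi * t))"

definition L2_norm_sq :: "(complex \<Rightarrow> complex) \<Rightarrow> real" where
  "L2_norm_sq f = (\<integral>z. (cmod (f z))\<^sup>2 \<partial>circle_measure)"

definition e_fun :: "nat \<Rightarrow> complex \<Rightarrow> complex" where
  "e_fun n z = z ^ n"

definition m0 :: "(nat \<Rightarrow> complex) \<Rightarrow> nat \<Rightarrow> complex \<Rightarrow> complex" where
  "m0 a D z = (\<Sum>k<2*D. a k * z ^ k)"

definition m1 :: "(nat \<Rightarrow> complex) \<Rightarrow> nat \<Rightarrow> complex \<Rightarrow> complex" where
  "m1 a D z = z ^ (2*D - 1) * cnj (m0 a D (- z))"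

definition mfilt :: "(nat \<Rightarrow> complex) \<Rightarrow> nat \<Rightarrow> nat \<Rightarrow> complex \<Rightarrow> complex" where
  "mfilt a D i = (if i = 0 then m0 a D else m1 a D)"

definition S_op :: "(nat \<Rightarrow> complex) \<Rightarrow> nat \<Rightarrow> nat \<Rightarrow> (complex \<Rightarrow> complex) \<Rightarrow> complex \<Rightarrow> complex" where
  "S_op a D i f z = mfilt a D i z * f (z\<^sup>2)"

text \<open>Its L2-adjoint, written out explicitly:
  (S_i^* f)(z) = 1/2 * sum over w with w^2 = z of conj(m_i(w)) f(w).\<close>
definition S_adj :: "(nat \<Rightarrow> complex) \<Rightarrow> nat \<Rightarrow> nat \<Rightarrow> (complex \<Rightarrow> complex) \<Rightarrow> complex \<Rightarrow> complex" where
  "S_adj a D i f z =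
     (cnj (mfilt a D i (csqrt z)) * f (csqrt z)
      + cnj (mfilt a D i (- csqrt z)) * f (- csqrt z)) / 2"

text \<open>S_{i_k}^* ... S_{i_1}^* e_0  (S_{i_1}^* is applied first).\<close>
fun adj_word :: "(nat \<Rightarrow> complex) \<Rightarrow> nat \<Rightarrow> (nat \<Rightarrow> nat) \<Rightarrow> nat \<Rightarrow> complex \<Rightarrow> complex" where
  "adj_word a D i 0 = e_fun 0"
| "adj_word a D i (Suc k) = S_adj a D (i (Suc k)) (adj_word a D i k)"

definition dyadic_point :: "(nat \<Rightarrow> nat) \<Rightarrow> nat \<Rightarrow> real" where
  "dyadic_point i k = (\<Sum>r=1..k. real (i r) / 2 ^ r)"

end

theory Submission
  imports Defs "HOL-Computational_Algebra.Polynomial"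
begin

text \<open>On the unit circle, where \<open>z\<inverse> = cnj z\<close>, the conjugate filter \<open>cnj m\<^sub>i\<close> is a
  polynomial in \<open>cnj z\<close> with constant term \<open>cnj a\<^sub>0\<close> (for \<open>i = 0\<close>) or \<open>-a\<^bsub>2D-1\<^esub>\<close>
  (for \<open>i = 1\<close>), and averaging over the two square roots in \<open>S\<^sub>i\<^sup>*\<close> keeps the even part of a
  polynomial. So \<open>S\<^bsub>i\<^sub>k\<^esub>\<^sup>* \<cdots> S\<^bsub>i\<^sub>1\<^esub>\<^sup>* e\<^sub>0\<close> is, on the circle, a polynomial in \<open>cnj z\<close>
  whose constant coefficient, i.e. its inner product with \<open>e\<^sub>0\<close>, is the product of these
  constant terms; Cauchy-Schwarz \<open>|\<langle>e\<^sub>0|f\<rangle>|\<^sup>2 \<le> \<parallel>f\<parallel>\<^sup>2\<close> gives the bound.\<close>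

lemma poly_even_odd_decomp:
  fixes p :: "'a::comm_ring_1 poly"
  obtains q r where "\<And>x. poly p x = poly q (x\<^sup>2) + x * poly r (x\<^sup>2)" and "coeff q 0 = coeff p 0"
proof -
  have "\<exists>q r. (\<forall>x. poly p x = poly q (x\<^sup>2) + x * poly r (x\<^sup>2)) \<and> coeff q 0 = coeff p 0"
  proof (induction p)
    case 0
    show ?case by (intro exI[of _ 0]) simp
  next
    case (pCons c p)
    then obtain q r where qr: "\<And>x. poly p x = poly q (x\<^sup>2) + x * poly r (x\<^sup>2)"
      by blast
    have "poly (pCons c p) x = poly (pCons c r) (x\<^sup>2) + x * poly q (x\<^sup>2)" for x
      using qr by (simp add: power2_eq_square distrib_left mult.assoc)
    then show ?case
      by (intro exI[of _ "pCons c r"] exI[of _ q]) simp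
  qed
  then show ?thesis using that by blast
qed

lemma poly_even_part:
  fixes p :: "'a::comm_ring_1 poly"
  obtains q where "\<And>x. poly p x + poly p (- x) = 2 * poly q (x\<^sup>2)" and "coeff q 0 = coeff p 0"
proof -
  obtain q r where decomp: "\<And>x. poly p x = poly q (x\<^sup>2) + x * poly r (x\<^sup>2)"
    and "coeff q 0 = coeff p 0"
    using poly_even_odd_decomp[of p] by blast
  moreover have "poly p x + poly p (- x) = 2 * poly q (x\<^sup>2)" for x
    unfolding decomp by simp
  ultimately show ?thesis
    using that by blast
qed

lemma cnj_power_mult_power_of_norm_1:
  fixes w :: complex
  assumes "cmod w = 1" and "k \<le> n"
  shows "cnj w ^ n * w ^ k = cnj w ^ (n - k)"
proof -
  have "cnj w * w = 1"
    using assms(1) by (simp add: complex_norm_square[symmetric] mult.commute)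
  then have "cnj w ^ (n - k) * (cnj w * w) ^ k = cnj w ^ (n - k)"
    by simp
  moreover have "cnj w ^ n = cnj w ^ (n - k) * cnj w ^ k"
    using assms(2) by (simp add: power_add[symmetric])
  ultimately show ?thesis
    by (simp add: power_mult_distrib mult.assoc)
qed

lemma prob_space_lebesgue_on_unit_interval: "prob_space (lebesgue_on {0..1::real})"
  by (rule prob_spaceI) (simp add: emeasure_restrict_space)

lemma (in prob_space) norm_expectation_sq_le:
  fixes f :: "'a \<Rightarrow> 'b::{banach, second_countable_topology}"
  assumes "integrable M f" "integrable M (\<lambda>x. (norm (f x))\<^sup>2)"
  shows "(norm (expectation f))\<^sup>2 \<le> expectation (\<lambda>x. (norm (f x))\<^sup>2)"
proof -
  have "(norm (expectation f))\<^sup>2 \<le> (expectation (\<lambda>x. norm (f x)))\<^sup>2"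
    by (intro power_mono integral_norm_bound) simp
  also have "\<dots> \<le> expectation (\<lambda>x. (norm (f x))\<^sup>2)"
    using variance_eq[of "\<lambda>x. norm (f x)"] variance_positive[of "\<lambda>x. norm (f x)"] assms by simp
  finally show ?thesis .
qed

lemma integral_cnj_cis_power:
  assumes "j \<ge> 1"
  shows "(\<integral>t. cnj (cis (2*pi*t)) ^ j \<partial>lebesgue_on {0..1::real}) = 0"
proof -
  define c where "c = - (2 * pi * real j) * \<i>"
  have c_nz: "c \<noteq> 0"
    using assms by (simp add: c_def)
  have exp_c: "exp c = 1"
    using exp_integer_2pi[of "of_nat j"] by (simp add: c_def exp_minus mult_ac)
  have cis_power: "cnj (cis (2*pi*t)) ^ j = exp (c * complex_of_real t)" for t
    unfolding cis_cnj Complex.DeMoivre by (simp add: cis_conv_exp c_def algebra_simps)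
  have "(\<integral>t. exp (c * complex_of_real t) \<partial>lebesgue_on {0..1::real})
      = integral {0..1} (\<lambda>t. exp (c * complex_of_real t))"
    by (intro lebesgue_integral_eq_integral continuous_imp_integrable_real continuous_intros) auto
  also have "\<dots> = 0"
    using Kronecker_Approximation_Theorem.integral_exp[of 1 c] c_nz exp_c by simp
  finally show ?thesis
    by (simp add: cis_power)
qed

lemma integral_poly_cnj_cis:
  "(\<integral>t. poly p (cnj (cis (2*pi*t))) \<partial>lebesgue_on {0..1::real}) = coeff p 0"
proof -
  interpret unit: prob_space "lebesgue_on {0..1::real}"
    by (rule prob_space_lebesgue_on_unit_interval)
  have "(\<integral>t. poly p (cnj (cis (2*pi*t))) \<partial>lebesgue_on {0..1})
      = (\<Sum>j\<le>degree p. coeff p j * (\<integral>t. cnj (cis (2*pi*t)) ^ j \<partial>lebesgue_on {0..1}))"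
    unfolding poly_altdef
    by (subst Bochner_Integration.integral_sum)
       (auto intro!: continuous_imp_integrable_real continuous_intros)
  also have "\<dots> = (\<Sum>j\<le>degree p. if j = 0 then coeff p 0 else 0)"
    by (intro sum.cong refl) (simp add: integral_cnj_cis_power measure_restrict_space)
  finally show ?thesis
    by simp
qed

lemma L2_norm_sq_eq_integral_cis:
  assumes "f \<in> borel_measurable borel"
  shows "L2_norm_sq f = (\<integral>t. (cmod (f (cis (2*pi*t))))\<^sup>2 \<partial>lebesgue_on {0..1})"
  unfolding L2_norm_sq_def circle_measure_def
  by (rule integral_distr)
     (use assms in \<open>auto intro!: continuous_imp_measurable_on_sets_lebesgue continuous_intros\<close>)

lemma L2_norm_sq_ge_coeff0:
  assumes "f \<in> borel_measurable borel" and "\<And>z. cmod z = 1 \<Longrightarrow> f z = poly p (cnj z)"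
  shows "(cmod (coeff p 0))\<^sup>2 \<le> L2_norm_sq f"
proof -
  interpret unit: prob_space "lebesgue_on {0..1::real}"
    by (rule prob_space_lebesgue_on_unit_interval)
  have "(cmod (coeff p 0))\<^sup>2 = (cmod (\<integral>t. poly p (cnj (cis (2*pi*t))) \<partial>lebesgue_on {0..1}))\<^sup>2"
    by (simp add: integral_poly_cnj_cis)
  also have "\<dots> \<le> (\<integral>t. (cmod (poly p (cnj (cis (2*pi*t)))))\<^sup>2 \<partial>lebesgue_on {0..1})"
    by (intro unit.norm_expectation_sq_le continuous_imp_integrable_real continuous_intros)
  also have "\<dots> = L2_norm_sq f"
    using assms by (simp add: L2_norm_sq_eq_integral_cis)
  finally show ?thesis .
qed

lemma borel_measurable_csqrt [measurable]: "csqrt \<in> borel_measurable borel"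
  unfolding borel_measurable_complex_iff by simp

lemma continuous_on_mfilt: "continuous_on UNIV (mfilt a D i)"
  unfolding mfilt_def m0_def m1_def by (auto intro!: continuous_intros)

lemma borel_measurable_S_adj:
  assumes "f \<in> borel_measurable borel"
  shows "S_adj a D i f \<in> borel_measurable borel"
proof -
  have "(\<lambda>z. cnj (mfilt a D i z)) \<in> borel_measurable borel"
    by (intro borel_measurable_continuous_onI continuous_intros
        continuous_on_compose2[OF continuous_on_mfilt]) auto
  note [measurable] = measurable_compose[OF _ this] measurable_compose[OF _ assms]
  show ?thesis unfolding S_adj_def[abs_def] by measurable
qed

lemma borel_measurable_adj_word: "adj_word a D i k \<in> borel_measurable borel"
  by (induction k) (simp_all add: e_fun_def borel_measurable_S_adj)

definition cnj_mfilt_coeff0 :: "(nat \<Rightarrow> complex) \<Rightarrow> nat \<Rightarrow> nat \<Rightarrow> complex" where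
  "cnj_mfilt_coeff0 a D i = (if i = 0 then cnj (a 0) else - a (2*D - 1))"

lemma cnj_mfilt_eq_poly_cnj:
  assumes "D \<ge> 1"
  obtains M where "\<And>w. cmod w = 1 \<Longrightarrow> cnj (mfilt a D i w) = poly M (cnj w)"
    and "coeff M 0 = cnj_mfilt_coeff0 a D i"
proof (cases "i = 0")
  case True
  let ?M = "\<Sum>k<2*D. monom (cnj (a k)) k"
  have "cnj (mfilt a D i w) = poly ?M (cnj w)" for w
    by (simp add: True mfilt_def m0_def poly_sum poly_monom)
  moreover have "coeff ?M 0 = cnj_mfilt_coeff0 a D i"
    using assms by (simp add: True cnj_mfilt_coeff0_def coeff_sum coeff_monom)
  ultimately show ?thesis using that by blast
next
  case False
  let ?M = "\<Sum>k<2*D. monom (a k * (-1)^k) (2*D - 1 - k)"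
  have "cnj (mfilt a D i w) = poly ?M (cnj w)" if "cmod w = 1" for w
  proof -
    have "cnj (mfilt a D i w) = cnj w ^ (2*D - 1) * (\<Sum>k<2*D. a k * (- w) ^ k)"
      by (simp add: False mfilt_def m1_def m0_def)
    also have "\<dots> = (\<Sum>k<2*D. a k * (-1)^k * (cnj w ^ (2*D - 1) * w ^ k))"
      by (simp add: sum_distrib_left power_minus[of w] mult_ac)
    also have "\<dots> = poly ?M (cnj w)"
      using that by (simp add: poly_sum poly_monom cnj_power_mult_power_of_norm_1)
    finally show ?thesis .
  qed
  moreover have "coeff ?M 0 = cnj_mfilt_coeff0 a D i"
  proof -
    have "coeff ?M 0 = (\<Sum>k<2*D. if k = 2*D - 1 then a k * (-1)^k else 0)"
      unfolding coeff_sum coeff_monom by (intro sum.cong) auto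
    also have "\<dots> = a (2*D - 1) * (-1)^(2*D - 1)"
      using assms by simp
    also have "\<dots> = cnj_mfilt_coeff0 a D i"
      using assms by (simp add: False cnj_mfilt_coeff0_def)
    finally show ?thesis .
  qed
  ultimately show ?thesis using that by blast
qed

lemma S_adj_eq_poly_cnj:
  assumes "D \<ge> 1" and f: "\<And>w. cmod w = 1 \<Longrightarrow> f w = poly p (cnj w)"
  obtains q where "\<And>z. cmod z = 1 \<Longrightarrow> S_adj a D i f z = poly q (cnj z)"
    and "coeff q 0 = cnj_mfilt_coeff0 a D i * coeff p 0"
proof -
  obtain M where M: "\<And>w. cmod w = 1 \<Longrightarrow> cnj (mfilt a D i w) = poly M (cnj w)"
    and M0: "coeff M 0 = cnj_mfilt_coeff0 a D i"
    using cnj_mfilt_eq_poly_cnj[OF assms(1)] by blast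
  obtain q where q: "\<And>x. poly (M * p) x + poly (M * p) (- x) = 2 * poly q (x\<^sup>2)"
    and q0: "coeff q 0 = coeff (M * p) 0"
    using poly_even_part by blast
  have "S_adj a D i f z = poly q (cnj z)" if "cmod z = 1" for z
  proof -
    have "cmod (csqrt z) = 1"
      using that by simp
    then have "S_adj a D i f z = (poly (M * p) (cnj (csqrt z)) + poly (M * p) (- cnj (csqrt z))) / 2"
      by (simp add: S_adj_def M f)
    also have "\<dots> = poly q ((cnj (csqrt z))\<^sup>2)"
      unfolding q by simp
    also have "\<dots> = poly q (cnj z)"
      by (simp flip: complex_cnj_power)
    finally show ?thesis .
  qed
  moreover have "coeff q 0 = cnj_mfilt_coeff0 a D i * coeff p 0"
    using q0 M0 by (simp add: coeff_mult_0)
  ultimately show ?thesis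
    using that by blast
qed

lemma adj_word_eq_poly_cnj:
  assumes "D \<ge> 1"
  shows "\<exists>p. (\<forall>z. cmod z = 1 \<longrightarrow> adj_word a D i k z = poly p (cnj z))
           \<and> coeff p 0 = (\<Prod>r\<in>{1..k}. cnj_mfilt_coeff0 a D (i r))"
proof (induction k)
  case 0
  show ?case
    by (intro exI[of _ 1]) (simp add: e_fun_def)
next
  case (Suc k)
  then obtain p where p: "\<And>z. cmod z = 1 \<Longrightarrow> adj_word a D i k z = poly p (cnj z)"
    and p0: "coeff p 0 = (\<Prod>r\<in>{1..k}. cnj_mfilt_coeff0 a D (i r))"
    by blast
  obtain q where "\<And>z. cmod z = 1 \<Longrightarrow> S_adj a D (i (Suc k)) (adj_word a D i k) z = poly q (cnj z)"
    and "coeff q 0 = cnj_mfilt_coeff0 a D (i (Suc k)) * coeff p 0"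
    using S_adj_eq_poly_cnj[OF assms p] by blast
  then show ?case
    using p0 by (intro exI[of _ q]) (simp add: prod.cl_ivl_Suc mult.commute)
qed

lemma norm_prod_cnj_mfilt_coeff0:
  assumes "finite A" and "\<forall>r\<in>A. i r \<in> {0, 1}"
  shows "cmod (\<Prod>r\<in>A. cnj_mfilt_coeff0 a D (i r))
    = cmod (a 0) ^ card {r\<in>A. i r = 0} * cmod (a (2*D - 1)) ^ card {r\<in>A. i r = 1}"
proof -
  have "{r\<in>A. i r = 1} = A \<inter> - {r. i r = 0}"
    using assms(2) by auto
  moreover have "cmod (\<Prod>r\<in>A. cnj_mfilt_coeff0 a D (i r))
      = (\<Prod>r\<in>A. if i r = 0 then cmod (a 0) else cmod (a (2*D - 1)))"
    unfolding prod_norm[symmetric] by (intro prod.cong) (simp_all add: cnj_mfilt_coeff0_def)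
  ultimately show ?thesis
    using assms(1) by (simp add: prod.If_cases Collect_conj_eq Int_commute)
qed

theorem proposition3p8:
  fixes D :: nat and a :: "nat \<Rightarrow> complex" and \<mu> :: "real measure"
  assumes D: "D \<ge> 1"
    and orth: "\<And>l::int. (\<Sum>k | k < 2*D \<and> 0 \<le> int k + 2*l \<and> int k + 2*l < int (2*D).
                       cnj (a k) * a (nat (int k + 2*l))) = (if l = 0 then 1 else 0)"
    and sum_a: "(\<Sum>k<2*D. a k) = complex_of_real (sqrt 2)"
    and prob: "prob_space \<mu>"
    and sets_mu: "sets \<mu> = sets (restrict_space borel {0..1::real})"
    and mu_def: "\<And>k (i :: nat \<Rightarrow> nat). (\<forall>r\<in>{1..k}. i r \<in> {0,1}) \<Longrightarrow>
        measure \<mu> {dyadic_point i k ..< dyadic_point i k + 1 / 2 ^ k}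
          = L2_norm_sq (adj_word a D i k)"
    and i01: "\<forall>r\<in>{1..k}. i r \<in> {0,1}"
  shows "measure \<mu> {dyadic_point i k ..< dyadic_point i k + 1 / 2 ^ k}
           \<ge> cmod (a 0) ^ (2 * card {r\<in>{1..k}. i r = 0})
             * cmod (a (2*D - 1)) ^ (2 * card {r\<in>{1..k}. i r = 1})"
proof -
  obtain p where p: "\<forall>z. cmod z = 1 \<longrightarrow> adj_word a D i k z = poly p (cnj z)"
    and p0: "coeff p 0 = (\<Prod>r\<in>{1..k}. cnj_mfilt_coeff0 a D (i r))"
    using adj_word_eq_poly_cnj[OF D] by blast
  have "cmod (a 0) ^ (2 * card {r\<in>{1..k}. i r = 0}) * cmod (a (2*D - 1)) ^ (2 * card {r\<in>{1..k}. i r = 1})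
      = (cmod (coeff p 0))\<^sup>2"
    using norm_prod_cnj_mfilt_coeff0[of "{1..k}" i a D] i01
    by (simp add: p0 power_mult_distrib power_mult[symmetric] mult.commute)
  also have "\<dots> \<le> L2_norm_sq (adj_word a D i k)"
    using p by (intro L2_norm_sq_ge_coeff0 borel_measurable_adj_word) auto
  also have "\<dots> = measure \<mu> {dyadic_point i k ..< dyadic_point i k + 1 / 2 ^ k}"
    using mu_def[OF i01] by simp
  finally show ?thesis .
qed

end
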